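(* Let $\lambda$ be an infinite cardinal, let $\mathbb T$ be the unit circle group with its usual topology, and let $\tau_B$ be the topology on the Brandt semigroup $B_\lambda(\mathbb T)$ defined as follows: for a non-zero point $(\alpha,x,\beta)$ a base of neighbourhoods is $\{(\alpha,U,\beta):U$ a neighbourhood of $x$ in $\mathbb T\}$, where $(\alpha,U,\beta)=\{(\alpha,u,\beta):u\in U\}$; a base of neighbourhoods of $0$ consists of the sets $B_\lambda(\mathbb T)\setminus\big(\mathbb T_{\alpha_1,\beta_1}\cup\dots\cup\mathbb T_{\alpha_n,\beta_n}\cup\{(\alpha,x_j,\beta):\alpha,\beta\in\lambda,\ j=1,\dots,k\}\big)$ with $n,k\in\mathbb N$, $\alpha_1,\beta_1,\dots,\alpha_n,\beta_n\in\lambda$, $x_1,\dots,x_k\in\mathbb T$, where $\mathbb T_{\alpha,\beta}=\{(\alpha,x,\beta):x\in\mathbb T\}$. Then the space $(B_\lambda(\mathbb T),\tau_B)$ is countably pracompact if and only if $\lambda\le\mathfrak c$.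
   Context: For a group $G$ and cardinal $\lambda$, $B_\lambda(G)=(\lambda\times G\times\lambda)\cup\{0\}$ with $(\alpha,a,\beta)(\gamma,b,\delta)=(\alpha,ab,\delta)$ if $\beta=\gamma$ and $0$ otherwise. A space $X$ is countably pracompact if there is a dense set $A\subseteq X$ such that every infinite subset of $A$ has an accumulation point in $X$. $\mathfrak c$ is the cardinality of the continuum. *)

theory Defs
  imports "HOL-Analysis.Analysis"
begin

definition circle :: "complex set" where
  "circle = sphere 0 1"

text \<open>Brandt semigroup B_lambda(T) over the index set L: None is the zero,
  Some (a, x, b) is the triple (a, x, b).\<close>
definition brandt_carrier :: "'l set \<Rightarrow> ('l \<times> complex \<times> 'l) option set" where
  "brandt_carrier L = insert None (Some ` (L \<times> circle \<times> L))"

definition brandt_mult ::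
  "('l \<times> complex \<times> 'l) option \<Rightarrow> ('l \<times> complex \<times> 'l) option \<Rightarrow> ('l \<times> complex \<times> 'l) option" where
  "brandt_mult p q = (case (p, q) of
     (Some (a, x, b), Some (c, y, d)) \<Rightarrow> (if b = c then Some (a, x * y, d) else None)
   | _ \<Rightarrow> None)"

definition brandt_nz_nbhds :: "'l set \<Rightarrow> ('l \<times> complex \<times> 'l) option set set" where
  "brandt_nz_nbhds L = {{Some (a, u, b) | u. u \<in> U} | a U b.
      a \<in> L \<and> b \<in> L \<and> openin (top_of_set circle) U}"

definition brandt_zero_nbhds :: "'l set \<Rightarrow> ('l \<times> complex \<times> 'l) option set set" where
  "brandt_zero_nbhds L = {brandt_carrier L -
      ({Some (a, x, b) | a x b. (a, b) \<in> F \<and> x \<in> circle}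
       \<union> {Some (a, x, b) | a x b. a \<in> L \<and> b \<in> L \<and> x \<in> S}) | F S.
      finite F \<and> F \<subseteq> L \<times> L \<and> finite S \<and> S \<subseteq> circle}"

definition brandt_topology :: "'l set \<Rightarrow> ('l \<times> complex \<times> 'l) option topology" where
  "brandt_topology L = topology_generated_by (brandt_nz_nbhds L \<union> brandt_zero_nbhds L)"

definition countably_pracompact :: "'a topology \<Rightarrow> bool" where
  "countably_pracompact X \<longleftrightarrow>
     (\<exists>A. A \<subseteq> topspace X \<and> X closure_of A = topspace X \<and>
        (\<forall>B. B \<subseteq> A \<and> infinite B \<longrightarrow> (\<exists>x \<in> topspace X. x \<in> X derived_set_of B)))"

end

theory Submission
  imports Defs
begin

(* Both directions rest on an explicit description of tau_B: every open set
   containing 0 contains a basic set "zero_nbhd L F S", and every open set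
   containing (a,y,b) contains a cell (a,W,b) with W open in T and y in W.

   (=>) A dense set A meets every cell (a,T,a); choose g a in T with
   (a, g a, a) in A.  A set of points sharing one middle coordinate has no
   accumulation point, so every fibre of g is finite, and hence
   |L| <= |T x N| <= c.

   (<=) If |L| <= c, then |L x L| <= c, and the cosets of Q in R, wrapped onto T,
   give pairwise disjoint dense sets D(a,b) in T.  The set A of all (a,x,b)
   with x in D(a,b) is dense.  An infinite B within A either has an infinite
   row, which accumulates in a cell by compactness of T, or has finite rows;
   since every middle coordinate occurs in A only once, 0 is then an
   accumulation point of B. *)

unbundle cardinal_syntax


section \<open>Basic neighbourhoods of the topology\<close>

definition zero_nbhd :: "'l set \<Rightarrow> ('l \<times> 'l) set \<Rightarrow> complex set \<Rightarrow> ('l \<times> complex \<times> 'l) option set" where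
  "zero_nbhd L F S = brandt_carrier L -
      ({Some (a, x, b) | a x b. (a, b) \<in> F \<and> x \<in> circle}
       \<union> {Some (a, x, b) | a x b. a \<in> L \<and> b \<in> L \<and> x \<in> S})"

definition cell :: "'l \<Rightarrow> 'l \<Rightarrow> complex set \<Rightarrow> ('l \<times> complex \<times> 'l) option set" where
  "cell a b W = {Some (a, u, b) | u. u \<in> W}"

lemma zero_nbhds_eq:
  "brandt_zero_nbhds L = {zero_nbhd L F S | F S. finite F \<and> F \<subseteq> L \<times> L \<and> finite S \<and> S \<subseteq> circle}"
  unfolding brandt_zero_nbhds_def zero_nbhd_def by simp

lemma nz_nbhds_eq:
  "brandt_nz_nbhds L = {cell a b U | a U b. a \<in> L \<and> b \<in> L \<and> openin (top_of_set circle) U}"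
  unfolding brandt_nz_nbhds_def cell_def by simp

lemma None_in_zero_nbhd: "None \<in> zero_nbhd L F S"
  unfolding zero_nbhd_def brandt_carrier_def by auto

lemma zero_nbhd_Un: "zero_nbhd L (F1 \<union> F2) (S1 \<union> S2) \<subseteq> zero_nbhd L F1 S1 \<inter> zero_nbhd L F2 S2"
  unfolding zero_nbhd_def by blast

lemma openin_circle_cofinite: "finite S \<Longrightarrow> openin (top_of_set circle) (circle - S)"
  by (metis closedin_closed_Int finite_imp_closed openin_diff openin_topspace
      topspace_euclidean_subtopology inf_commute Diff_Int2 Int_absorb)

lemma topspace_brandt_topology: "topspace (brandt_topology L) = brandt_carrier L"
proof -
  have "zero_nbhd L {} {} = brandt_carrier L"
    unfolding zero_nbhd_def by auto
  then have "brandt_carrier L \<in> brandt_zero_nbhds L"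
    unfolding zero_nbhds_eq by force
  moreover have "s \<subseteq> brandt_carrier L" if "s \<in> brandt_nz_nbhds L \<union> brandt_zero_nbhds L" for s
    using that unfolding nz_nbhds_eq zero_nbhds_eq
    by (auto simp: cell_def zero_nbhd_def brandt_carrier_def dest!: openin_subset)
  ultimately show ?thesis
    unfolding brandt_topology_def topology_generated_by_topspace by blast
qed

lemma openin_zero_nbhd:
  "finite F \<Longrightarrow> F \<subseteq> L \<times> L \<Longrightarrow> finite S \<Longrightarrow> S \<subseteq> circle \<Longrightarrow> openin (brandt_topology L) (zero_nbhd L F S)"
  unfolding brandt_topology_def by (rule topology_generated_by_Basis) (auto simp: zero_nbhds_eq)

lemma openin_cell:
  "a \<in> L \<Longrightarrow> b \<in> L \<Longrightarrow> openin (top_of_set circle) W \<Longrightarrow> openin (brandt_topology L) (cell a b W)"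
  unfolding brandt_topology_def by (rule topology_generated_by_Basis) (auto simp: nz_nbhds_eq)

lemma generate_topology_on_local_base:
  assumes "generate_topology_on \<S> U" "p \<in> U"
    and refines: "\<And>s. s \<in> \<S> \<Longrightarrow> p \<in> s \<Longrightarrow> \<exists>N\<in>\<N>. N \<subseteq> s"
    and directed: "\<And>N1 N2. N1 \<in> \<N> \<Longrightarrow> N2 \<in> \<N> \<Longrightarrow> \<exists>N\<in>\<N>. N \<subseteq> N1 \<inter> N2"
  shows "\<exists>N\<in>\<N>. N \<subseteq> U"
  using assms(1,2)
proof (induction rule: generate_topology_on.induct)
  case Empty
  then show ?case by simp
next
  case (Int A B)
  then obtain N1 N2 where "N1 \<in> \<N>" "N1 \<subseteq> A" "N2 \<in> \<N>" "N2 \<subseteq> B"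
    by (meson IntD1 IntD2)
  then show ?case using directed by (meson le_inf_iff order_trans)
next
  case (UN K)
  then obtain k where "k \<in> K" "p \<in> k" by blast
  with UN.IH show ?case by (meson Union_upper order_trans)
next
  case (Basis s)
  then show ?case using refines by blast
qed

lemma open_contains_zero_nbhd:
  assumes "openin (brandt_topology L) U" "None \<in> U"
  obtains F S where "finite F" "F \<subseteq> L \<times> L" "finite S" "S \<subseteq> circle" "zero_nbhd L F S \<subseteq> U"
proof -
  let ?\<N> = "{zero_nbhd L F S | F S. finite F \<and> F \<subseteq> L \<times> L \<and> finite S \<and> S \<subseteq> circle}"
  have "\<exists>N\<in>?\<N>. N \<subseteq> U"
  proof (rule generate_topology_on_local_base)
    show "generate_topology_on (brandt_nz_nbhds L \<union> brandt_zero_nbhds L) U"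
      using assms(1) by (simp add: brandt_topology_def openin_topology_generated_by_iff)
    show "\<exists>N\<in>?\<N>. N \<subseteq> s" if "s \<in> brandt_nz_nbhds L \<union> brandt_zero_nbhds L" "None \<in> s" for s
    proof -
      have "s \<notin> brandt_nz_nbhds L"
        using that(2) unfolding nz_nbhds_eq cell_def by blast
      then have "s \<in> ?\<N>"
        using that(1) unfolding zero_nbhds_eq by blast
      then show ?thesis by blast
    qed
    show "\<exists>N\<in>?\<N>. N \<subseteq> N1 \<inter> N2" if "N1 \<in> ?\<N>" "N2 \<in> ?\<N>" for N1 N2
    proof -
      from that obtain F1 S1 F2 S2 where N:
        "N1 = zero_nbhd L F1 S1" "finite F1" "F1 \<subseteq> L \<times> L" "finite S1" "S1 \<subseteq> circle"
        "N2 = zero_nbhd L F2 S2" "finite F2" "F2 \<subseteq> L \<times> L" "finite S2" "S2 \<subseteq> circle"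
        by blast
      have "zero_nbhd L (F1 \<union> F2) (S1 \<union> S2) \<in> ?\<N>"
        unfolding mem_Collect_eq
        by (intro exI[of _ "F1 \<union> F2"] exI[of _ "S1 \<union> S2"]) (simp add: N)
      moreover have "zero_nbhd L (F1 \<union> F2) (S1 \<union> S2) \<subseteq> N1 \<inter> N2"
        unfolding N(1,6) by (rule zero_nbhd_Un)
      ultimately show ?thesis by blast
    qed
  qed (rule assms(2))
  then show ?thesis using that by blast
qed

lemma open_contains_cell:
  assumes "openin (brandt_topology L) U" "Some (a, y, b) \<in> U"
  obtains W where "openin (top_of_set circle) W" "y \<in> W" "cell a b W \<subseteq> U"
proof -
  let ?\<N> = "{cell a b W | W. openin (top_of_set circle) W \<and> y \<in> W}"
  have "\<exists>N\<in>?\<N>. N \<subseteq> U"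
  proof (rule generate_topology_on_local_base)
    show "generate_topology_on (brandt_nz_nbhds L \<union> brandt_zero_nbhds L) U"
      using assms(1) by (simp add: brandt_topology_def openin_topology_generated_by_iff)
    show "\<exists>N\<in>?\<N>. N \<subseteq> s" if s: "s \<in> brandt_nz_nbhds L \<union> brandt_zero_nbhds L" "Some (a, y, b) \<in> s" for s
    proof (cases "s \<in> brandt_nz_nbhds L")
      case True
      then obtain a' b' W where W: "s = cell a' b' W" "openin (top_of_set circle) W"
        unfolding nz_nbhds_eq by blast
      with s(2) have "a' = a" "b' = b" "y \<in> W" unfolding cell_def by auto
      with W have "s \<in> ?\<N>" by blast
      then show ?thesis by blast
    next
      case False
      then obtain F S where FS: "s = zero_nbhd L F S" "finite S"
        using s(1) unfolding zero_nbhds_eq by blast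
      then have "y \<in> circle - S" "cell a b (circle - S) \<subseteq> s"
        using s(2) unfolding zero_nbhd_def cell_def brandt_carrier_def by auto
      moreover have "openin (top_of_set circle) (circle - S)"
        using openin_circle_cofinite FS(2) .
      ultimately show ?thesis by blast
    qed
    show "\<exists>N\<in>?\<N>. N \<subseteq> N1 \<inter> N2" if "N1 \<in> ?\<N>" "N2 \<in> ?\<N>" for N1 N2
    proof -
      from that obtain W1 W2 where W:
        "N1 = cell a b W1" "openin (top_of_set circle) W1" "y \<in> W1"
        "N2 = cell a b W2" "openin (top_of_set circle) W2" "y \<in> W2"
        by blast
      have "cell a b (W1 \<inter> W2) \<in> ?\<N>"
        using openin_Int[OF W(2,5)] W(3,6) by blast
      moreover have "cell a b (W1 \<inter> W2) \<subseteq> N1 \<inter> N2"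
        unfolding W(1,4) cell_def by blast
      ultimately show ?thesis by blast
    qed
  qed (rule assms(2))
  then show ?thesis using that by blast
qed


section \<open>Accumulation points\<close>

text \<open>Points sharing one middle coordinate x form a discrete closed set: the
  neighbourhood of 0 omitting the line x, and each cell minus x, meet such a
  set in at most one point.\<close>
lemma derived_set_of_constant_coordinate:
  assumes "x \<in> circle" "B \<subseteq> {Some (a, x, b) | a b. True}"
  shows "brandt_topology L derived_set_of B = {}"
proof (rule equals0I)
  fix p assume p: "p \<in> brandt_topology L derived_set_of B"
  then have p_carrier: "p \<in> brandt_carrier L" and
    acc: "\<forall>T. p \<in> T \<and> openin (brandt_topology L) T \<longrightarrow> (\<exists>q\<noteq>p. q \<in> B \<and> q \<in> T)"
    unfolding in_derived_set_of topspace_brandt_topology by blast+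
  show False
  proof (cases p)
    case None
    have "openin (brandt_topology L) (zero_nbhd L {} {x})"
      using openin_zero_nbhd[of "{}" L "{x}"] assms(1) by simp
    moreover have "p \<in> zero_nbhd L {} {x}"
      using None None_in_zero_nbhd by simp
    ultimately obtain q where "q \<in> B" "q \<in> zero_nbhd L {} {x}"
      using acc by blast
    moreover from \<open>q \<in> B\<close> obtain a b where "q = Some (a, x, b)"
      using assms(2) by blast
    ultimately show False unfolding zero_nbhd_def brandt_carrier_def by auto
  next
    case (Some t)
    then obtain a y b where p_eq: "p = Some (a, y, b)" by (metis prod_cases3)
    with p_carrier have "a \<in> L" "b \<in> L" "y \<in> circle"
      unfolding brandt_carrier_def by auto
    then have "openin (brandt_topology L) (cell a b (circle - ({x} - {y})))"
      using openin_cell openin_circle_cofinite[of "{x} - {y}"] by simp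
    moreover have "p \<in> cell a b (circle - ({x} - {y}))"
      using p_eq \<open>y \<in> circle\<close> unfolding cell_def by blast
    ultimately obtain q where "q \<noteq> p" "q \<in> B" "q \<in> cell a b (circle - ({x} - {y}))"
      using acc by blast
    moreover from \<open>q \<in> B\<close> obtain a' b' where "q = Some (a', x, b')"
      using assms(2) by blast
    ultimately show False using p_eq unfolding cell_def by auto
  qed
qed

text \<open>An infinite row inside one cell accumulates inside that cell, since the
  circle is compact.\<close>
lemma row_accumulation:
  assumes "a \<in> L" "b \<in> L" "R \<subseteq> circle" "infinite R" "\<And>x. x \<in> R \<Longrightarrow> Some (a, x, b) \<in> B"
  shows "\<exists>y\<in>circle. Some (a, y, b) \<in> brandt_topology L derived_set_of B"
proof -
  have "compact circle" unfolding circle_def by simp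
  then obtain y where y: "y \<in> circle" "y islimpt R"
    using Heine_Borel_imp_Bolzano_Weierstrass[OF _ assms(4,3)] by blast
  have "Some (a, y, b) \<in> brandt_topology L derived_set_of B"
    unfolding in_derived_set_of topspace_brandt_topology
  proof (intro conjI allI impI)
    show "Some (a, y, b) \<in> brandt_carrier L"
      using assms(1,2) y(1) unfolding brandt_carrier_def by auto
    fix T assume T: "Some (a, y, b) \<in> T \<and> openin (brandt_topology L) T"
    then obtain W where W: "openin (top_of_set circle) W" "y \<in> W" "cell a b W \<subseteq> T"
      using open_contains_cell[of L T a y b] by blast
    then obtain V where V: "open V" "W = circle \<inter> V"
      by (auto simp: openin_open)
    with W(2) have "y \<in> V" by blast
    then obtain x where "x \<in> R" "x \<in> V" "x \<noteq> y"
      using islimptE[OF y(2) _ V(1)] by blast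
    with assms(3) V(2) have "x \<in> W" by blast
    with W(3) assms(5) \<open>x \<in> R\<close> \<open>x \<noteq> y\<close>
    show "\<exists>q\<noteq>Some (a, y, b). q \<in> B \<and> q \<in> T"
      unfolding cell_def by blast
  qed
  with y(1) show ?thesis by blast
qed

text \<open>An infinite set of non-zero points all of whose rows (fixed indices) and
  all of whose lines (fixed middle coordinate) are finite accumulates at 0:
  a basic neighbourhood of 0 misses only finitely many rows and lines.\<close>
lemma zero_accumulation:
  assumes B: "B \<subseteq> Some ` (L \<times> circle \<times> L)" "infinite B"
    and rows: "\<And>a b. finite {x. Some (a, x, b) \<in> B}"
    and lines: "\<And>x. finite {(a, b). Some (a, x, b) \<in> B}"
  shows "None \<in> brandt_topology L derived_set_of B"
  unfolding in_derived_set_of topspace_brandt_topology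
proof (intro conjI allI impI)
  show "None \<in> brandt_carrier L" by (simp add: brandt_carrier_def)
  fix T assume "None \<in> T \<and> openin (brandt_topology L) T"
  then obtain F S where FS: "finite F" "finite S" "zero_nbhd L F S \<subseteq> T"
    by (meson open_contains_zero_nbhd)
  let ?rows = "\<Union>(a, b)\<in>F. (\<lambda>x. Some (a, x, b)) ` {x. Some (a, x, b) \<in> B}"
  let ?lines = "\<Union>x\<in>S. (\<lambda>(a, b). Some (a, x, b)) ` {(a, b). Some (a, x, b) \<in> B}"
  have "B - zero_nbhd L F S \<subseteq> ?rows \<union> ?lines"
  proof
    fix q assume q: "q \<in> B - zero_nbhd L F S"
    then have "q \<in> Some ` (L \<times> circle \<times> L)" using B(1) by blast
    then obtain a x b where q_eq: "q = Some (a, x, b)" "a \<in> L" "x \<in> circle" "b \<in> L"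
      by auto
    then have "(a, b) \<in> F \<or> x \<in> S"
      using q unfolding zero_nbhd_def brandt_carrier_def by auto
    then show "q \<in> ?rows \<union> ?lines"
      using q q_eq(1) by auto
  qed
  moreover have "finite (?rows \<union> ?lines)"
    using FS(1,2) rows lines by auto
  ultimately have "infinite (B - (B - zero_nbhd L F S))"
    using B(2) Diff_infinite_finite finite_subset by blast
  then obtain q where q: "q \<in> B" "q \<in> zero_nbhd L F S"
    using infinite_imp_nonempty by blast
  moreover have "q \<noteq> None" using q(1) B(1) by auto
  ultimately show "\<exists>q\<noteq>None. q \<in> B \<and> q \<in> T" using FS(3) by blast
qed


section \<open>Cardinal arithmetic below the continuum\<close>

text \<open>The circle embeds into R via the argument function.\<close>
lemma card_of_circle_le_continuum: "|circle| \<le>o |UNIV :: real set|"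
proof -
  have "inj_on Arg circle"
    by (rule inj_onI) (metis rcis_cmod_Arg circle_def mem_sphere_0)
  then show ?thesis using card_of_ordLeq by blast
qed

lemma card_of_times_le_continuum:
  "|A| \<le>o |UNIV :: real set| \<Longrightarrow> |B| \<le>o |UNIV :: real set| \<Longrightarrow> |A \<times> B| \<le>o |UNIV :: real set|"
  by (rule card_of_Times_ordLeq_infinite_Field)
     (auto simp: card_of_Card_order infinite_UNIV_char_0 Field_card_of card_of_card_order_on)

lemma inj_into_reals_if_countable_fibres:
  fixes g :: "'l \<Rightarrow> 'c"
  assumes "g ` L \<subseteq> C" "|C| \<le>o |UNIV :: real set|" "\<And>x. countable {a \<in> L. g a = x}"
  shows "\<exists>f :: 'l \<Rightarrow> real. inj_on f L"
proof -
  define fibre where "fibre x = {a \<in> L. g a = x}" for x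
  define h where "h a = (g a, to_nat_on (fibre (g a)) a)" for a
  have "inj_on h L"
  proof (rule inj_onI)
    fix a a' assume "a \<in> L" "a' \<in> L" "h a = h a'"
    then have "g a = g a'" "to_nat_on (fibre (g a)) a = to_nat_on (fibre (g a)) a'"
      "a \<in> fibre (g a)" "a' \<in> fibre (g a)"
      unfolding h_def fibre_def by auto
    then show "a = a'"
      using inj_on_to_nat_on[OF assms(3)[of "g a", folded fibre_def]] by (meson inj_onD)
  qed
  moreover have "h ` L \<subseteq> C \<times> (UNIV :: nat set)"
    using assms(1) unfolding h_def by auto
  ultimately have "|L| \<le>o |C \<times> (UNIV :: nat set)|"
    using card_of_ordLeq by blast
  moreover have "|UNIV :: nat set| \<le>o |UNIV :: real set|"
    using infinite_iff_card_of_nat infinite_UNIV_char_0 by blast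
  then have "|C \<times> (UNIV :: nat set)| \<le>o |UNIV :: real set|"
    using card_of_times_le_continuum assms(2) by blast
  ultimately have "|L| \<le>o |UNIV :: real set|"
    by (rule ordLeq_transitive)
  then show ?thesis using card_of_ordLeq[of L "UNIV :: real set"] by blast
qed


section \<open>Countable pracompactness forces |L| \<le> c\<close>

text \<open>A dense set picks one point (a, g a, a) in each diagonal cell; since
  points sharing a middle coordinate never accumulate, g has finite fibres.\<close>
lemma pracompact_imp_card_le_continuum:
  assumes "countably_pracompact (brandt_topology L)"
  shows "\<exists>f :: 'l \<Rightarrow> real. inj_on f L"
proof -
  from assms obtain A where A: "brandt_topology L closure_of A = brandt_carrier L"
    "\<And>B. B \<subseteq> A \<Longrightarrow> infinite B \<Longrightarrow> \<exists>x \<in> brandt_carrier L. x \<in> brandt_topology L derived_set_of B"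
    unfolding countably_pracompact_def topspace_brandt_topology by blast
  have "\<exists>x. x \<in> circle \<and> Some (a, x, a) \<in> A" if "a \<in> L" for a
  proof -
    have "1 \<in> circle" by (simp add: circle_def)
    with that A(1) have "Some (a, 1, a) \<in> brandt_topology L closure_of A"
      by (simp add: brandt_carrier_def)
    moreover have "openin (brandt_topology L) (cell a a circle)"
      using openin_cell[OF that that] by simp
    moreover have "Some (a, 1, a) \<in> cell a a circle"
      using \<open>1 \<in> circle\<close> by (simp add: cell_def)
    ultimately obtain q where "q \<in> A" "q \<in> cell a a circle"
      unfolding in_closure_of by blast
    then show ?thesis unfolding cell_def by blast
  qed
  then obtain g where g: "\<And>a. a \<in> L \<Longrightarrow> g a \<in> circle \<and> Some (a, g a, a) \<in> A"
    by metis
  have "finite {a \<in> L. g a = x}" for x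
  proof (rule ccontr)
    assume fibre_infinite: "infinite {a \<in> L. g a = x}"
    then obtain a0 where "a0 \<in> L" "g a0 = x"
      using infinite_imp_nonempty by blast
    then have "x \<in> circle" using g by blast
    let ?B = "(\<lambda>a. Some (a, x, a)) ` {a \<in> L. g a = x}"
    have "inj_on (\<lambda>a. Some (a, x, a)) {a \<in> L. g a = x}"
      by (rule inj_onI) simp
    then have "infinite ?B"
      using fibre_infinite by (simp add: finite_image_iff)
    moreover have "?B \<subseteq> A" using g by auto
    moreover have "brandt_topology L derived_set_of ?B = {}"
      by (rule derived_set_of_constant_coordinate[OF \<open>x \<in> circle\<close>]) blast
    ultimately show False using A(2) by blast
  qed
  then show ?thesis
    using inj_into_reals_if_countable_fibres[of g L circle] g card_of_circle_le_continuum
    by (auto intro: countable_finite)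
qed


section \<open>Continuum many disjoint dense subsets of the circle\<close>

definition wind :: "real \<Rightarrow> complex" where
  "wind t = cis (2 * pi * t)"

lemma wind_in_circle: "wind t \<in> circle"
  by (simp add: wind_def circle_def)

lemma continuous_on_wind: "continuous_on UNIV wind"
  unfolding wind_def cis_conv_exp by (intro continuous_intros)

lemma wind_Arg: "z \<in> circle \<Longrightarrow> wind (Arg z / (2 * pi)) = z"
  using rcis_cmod_Arg[of z] by (simp add: wind_def circle_def rcis_def)

lemma wind_eq_imp_diff_rational:
  assumes "wind s = wind u"
  shows "s - u \<in> \<rat>"
proof -
  from assms obtain n :: int where
    "\<i> * complex_of_real (2 * pi * s) = \<i> * complex_of_real (2 * pi * u) + (of_int (2 * n) * pi) * \<i>"
    unfolding wind_def cis_conv_exp exp_eq by blast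
  then have "Im (\<i> * complex_of_real (2 * pi * s))
      = Im (\<i> * complex_of_real (2 * pi * u) + (of_int (2 * n) * pi) * \<i>)"
    by simp
  then have "2 * pi * s = 2 * pi * u + 2 * n * pi" by simp
  then have "(2 * pi) * s = (2 * pi) * (u + n)" by (simp add: algebra_simps)
  then have "s = u + n" using pi_gt_zero by simp
  then show ?thesis by simp
qed

definition rat_coset :: "real \<Rightarrow> real set" where
  "rat_coset t = {s. s - t \<in> \<rat>}"

lemma countable_rat_coset: "countable (rat_coset t)"
proof -
  have "rat_coset t = (\<lambda>q. q + t) ` \<rat>"
    unfolding rat_coset_def by (auto simp: image_iff intro!: bexI[where x = "_ - t"])
  then show ?thesis by (metis countable_image countable_rat)
qed

lemma rat_coset_eq_iff: "rat_coset s = rat_coset t \<longleftrightarrow> s - t \<in> \<rat>"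
proof
  assume "rat_coset s = rat_coset t"
  moreover have "s \<in> rat_coset s" by (simp add: rat_coset_def)
  ultimately show "s - t \<in> \<rat>" by (simp add: rat_coset_def)
next
  assume st: "s - t \<in> \<rat>"
  have "x - s \<in> \<rat> \<longleftrightarrow> x - t \<in> \<rat>" for x
  proof -
    have "x - t = (x - s) + (s - t)" "x - s = (x - t) - (s - t)" by simp_all
    then show ?thesis using st by (metis Rats_add Rats_diff)
  qed
  then show "rat_coset s = rat_coset t" by (simp add: rat_coset_def)
qed

lemma rat_coset_meets_open:
  assumes "open G" "G \<noteq> {}"
  shows "rat_coset t \<inter> G \<noteq> {}"
proof -
  obtain x e where "e > 0" "ball x e \<subseteq> G"
    using assms by (meson ex_in_conv open_contains_ball)
  moreover obtain r where "r \<in> \<rat>" "x - t < r" "r < x - t + e"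
    using Rats_dense_in_real[of "x - t" "x - t + e"] \<open>e > 0\<close> by auto
  ultimately have "r + t \<in> rat_coset t \<inter> G"
    unfolding rat_coset_def by (auto simp: dist_real_def)
  then show ?thesis by blast
qed

text \<open>There are continuum many cosets: R is their union, and each is countable.\<close>
lemma card_of_rat_cosets: "|UNIV :: real set| \<le>o |range rat_coset|"
proof -
  have "t \<in> rat_coset t" for t
    by (simp add: rat_coset_def)
  then have union: "(\<Union>C \<in> range rat_coset. C) = UNIV"
    by blast
  have infinite: "infinite (range rat_coset)"
  proof
    assume "finite (range rat_coset)"
    then have "countable (\<Union>C \<in> range rat_coset. C)"
      using countable_rat_coset by (intro countable_UN) (auto intro: countable_finite)
    then show False using union uncountable_UNIV_real by simp
  qed
  have nat_le: "|UNIV :: nat set| \<le>o |range rat_coset|"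
    by (rule infinite_iff_card_of_nat[THEN iffD1, OF infinite])
  have "\<forall>C \<in> range rat_coset. |C| \<le>o |range rat_coset|"
  proof
    fix C assume "C \<in> range rat_coset"
    then have "countable C" using countable_rat_coset by blast
    then obtain f :: "real \<Rightarrow> nat" where "inj_on f C"
      unfolding countable_def by blast
    then have "|C| \<le>o |UNIV :: nat set|"
      by (meson card_of_ordLeq subset_UNIV)
    then show "|C| \<le>o |range rat_coset|"
      using nat_le by (rule ordLeq_transitive)
  qed
  then have "|\<Union>C \<in> range rat_coset. C| \<le>o |range rat_coset|"
    by (rule card_of_UNION_ordLeq_infinite[OF infinite ordLeq_refl[OF card_of_Card_order]])
  then show ?thesis using union by simp
qed

text \<open>Each wrapped coset is dense in the circle, since wind is continuous and
  onto T.\<close>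
lemma wind_rat_coset_dense:
  assumes "openin (top_of_set circle) W" "W \<noteq> {}"
  shows "wind ` rat_coset t \<inter> W \<noteq> {}"
proof -
  obtain V where V: "open V" "W = circle \<inter> V"
    using assms(1) by (auto simp: openin_open)
  obtain z where "z \<in> W" using assms(2) by blast
  then have "Arg z / (2 * pi) \<in> wind -` V"
    using V(2) wind_Arg by auto
  moreover have "open (wind -` V)"
    using open_vimage[OF V(1) continuous_on_wind] .
  ultimately have "rat_coset t \<inter> wind -` V \<noteq> {}"
    using rat_coset_meets_open[of "wind -` V" t] by blast
  then obtain s where "s \<in> rat_coset t" "wind s \<in> V" by blast
  then have "wind s \<in> wind ` rat_coset t \<inter> W"
    using V(2) wind_in_circle by blast
  then show ?thesis by blast
qed

text \<open>Distinct cosets stay disjoint after wrapping, as wind only identifies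
  points differing by an integer.\<close>
lemma wind_rat_coset_disjoint:
  assumes "rat_coset s \<noteq> rat_coset t"
  shows "wind ` rat_coset s \<inter> wind ` rat_coset t = {}"
proof (rule equals0I)
  fix z assume "z \<in> wind ` rat_coset s \<inter> wind ` rat_coset t"
  then obtain x y where xy: "x \<in> rat_coset s" "y \<in> rat_coset t" "wind x = wind y"
    by blast
  then have "x - s \<in> \<rat>" "y - t \<in> \<rat>"
    unfolding rat_coset_def by simp_all
  then have "rat_coset x = rat_coset s" "rat_coset y = rat_coset t"
    using rat_coset_eq_iff by blast+
  moreover have "rat_coset x = rat_coset y"
    using wind_eq_imp_diff_rational[OF xy(3)] rat_coset_eq_iff by blast
  ultimately show False using assms by simp
qed

text \<open>Any family of at most c indices can be assigned pairwise disjoint dense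
  subsets of the circle: send distinct indices to distinct cosets of Q and
  wrap them onto T.\<close>
lemma disjoint_dense_subsets_of_circle:
  assumes "|I| \<le>o |UNIV :: real set|"
  obtains D where "\<And>i. D i \<subseteq> circle"
    "\<And>i W. i \<in> I \<Longrightarrow> openin (top_of_set circle) W \<Longrightarrow> W \<noteq> {} \<Longrightarrow> D i \<inter> W \<noteq> {}"
    "disjoint_family_on D I"
proof -
  have "|I| \<le>o |range rat_coset|"
    using assms card_of_rat_cosets by (rule ordLeq_transitive)
  then obtain h where h: "inj_on h I" "h ` I \<subseteq> range rat_coset"
    unfolding card_of_ordLeq[symmetric] by blast
  define D where "D i = wind ` h i" for i
  have subset: "D i \<subseteq> circle" for i
    unfolding D_def using wind_in_circle by blast
  have dense: "D i \<inter> W \<noteq> {}"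
    if i: "i \<in> I" and W: "openin (top_of_set circle) W" "W \<noteq> {}" for i W
  proof -
    obtain t where "h i = rat_coset t" using h(2) i by blast
    then show ?thesis unfolding D_def using wind_rat_coset_dense[OF W] by metis
  qed
  have "D i \<inter> D j = {}" if ij: "i \<in> I" "j \<in> I" "i \<noteq> j" for i j
  proof -
    have "h i \<in> range rat_coset" "h j \<in> range rat_coset"
      using h(2) ij(1,2) by blast+
    then obtain t1 t2 where t: "h i = rat_coset t1" "h j = rat_coset t2"
      by blast
    have "h i \<noteq> h j" using h(1) ij inj_onD by metis
    then have "rat_coset t1 \<noteq> rat_coset t2" unfolding t .
    then show ?thesis unfolding D_def t by (rule wind_rat_coset_disjoint)
  qed
  then have "disjoint_family_on D I"
    unfolding disjoint_family_on_def by blast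
  with subset dense show ?thesis by (rule that)
qed


section \<open>|L| \<le> c implies countable pracompactness\<close>

text \<open>The circle is a connected set with more than one point, hence infinite.\<close>
lemma infinite_circle: "infinite circle"
proof
  assume "finite circle"
  moreover have "connected circle"
    unfolding circle_def by (rule connected_sphere) simp
  ultimately obtain z where "circle = {z}"
    using connected_finite_iff_sing by (metis empty_iff mem_sphere_0 norm_one circle_def)
  moreover have "1 \<in> circle" "-1 \<in> circle" by (simp_all add: circle_def)
  ultimately have "(1 :: complex) = -1" by (metis singletonD)
  then show False by simp
qed

definition witness_set :: "'l set \<Rightarrow> ('l \<times> 'l \<Rightarrow> complex set) \<Rightarrow> ('l \<times> complex \<times> 'l) option set" where
  "witness_set L D = {Some (a, x, b) | a x b. a \<in> L \<and> b \<in> L \<and> x \<in> D (a, b)}"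

text \<open>The witness set is dense: a basic neighbourhood of 0 contains some whole
  cell minus finitely many points, and the D(a,b) are dense in T.\<close>
lemma closure_of_witness_set:
  assumes "infinite L"
    and dense: "\<And>p W. p \<in> L \<times> L \<Longrightarrow> openin (top_of_set circle) W \<Longrightarrow> W \<noteq> {} \<Longrightarrow> D p \<inter> W \<noteq> {}"
  shows "brandt_topology L closure_of witness_set L D = brandt_carrier L"
proof -
  have "\<exists>q \<in> witness_set L D. q \<in> T"
    if p: "p \<in> brandt_carrier L" "p \<in> T" "openin (brandt_topology L) T" for p T
  proof (cases p)
    case None
    then obtain F S where FS: "finite F" "finite S" "zero_nbhd L F S \<subseteq> T"
      using p(2,3) by (meson open_contains_zero_nbhd)
    have "infinite (L \<times> L)" using assms(1) infinite_cartesian_product by blast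
    then have "L \<times> L - F \<noteq> {}"
      using Diff_infinite_finite[OF FS(1)] infinite_imp_nonempty by metis
    then obtain a b where ab: "(a, b) \<in> L \<times> L" "(a, b) \<notin> F"
      by auto
    have "circle - S \<noteq> {}"
      using Diff_infinite_finite[OF FS(2) infinite_circle] infinite_imp_nonempty by metis
    then obtain x where "x \<in> D (a, b)" "x \<in> circle - S"
      using dense[OF ab(1) openin_circle_cofinite[OF FS(2)]] by blast
    then have "Some (a, x, b) \<in> witness_set L D \<inter> zero_nbhd L F S"
      using ab unfolding witness_set_def zero_nbhd_def brandt_carrier_def by auto
    then show ?thesis using FS(3) by blast
  next
    case (Some t)
    then obtain a y b where p_eq: "p = Some (a, y, b)" by (metis prod_cases3)
    then have ab: "(a, b) \<in> L \<times> L" using p(1) unfolding brandt_carrier_def by auto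
    have "Some (a, y, b) \<in> T" using p(2) p_eq by simp
    then obtain W where W: "openin (top_of_set circle) W" "y \<in> W" "cell a b W \<subseteq> T"
      using open_contains_cell[OF p(3)] by blast
    then obtain x where "x \<in> D (a, b)" "x \<in> W" using dense[OF ab W(1)] by blast
    then have "Some (a, x, b) \<in> witness_set L D \<inter> T"
      using ab W(3) unfolding witness_set_def cell_def by auto
    then show ?thesis by blast
  qed
  then have "brandt_carrier L \<subseteq> brandt_topology L closure_of witness_set L D"
    unfolding in_closure_of topspace_brandt_topology subset_iff by blast
  moreover have "brandt_topology L closure_of witness_set L D \<subseteq> brandt_carrier L"
    using closure_of_subset_topspace topspace_brandt_topology by metis
  ultimately show ?thesis by (rule subset_antisym[rotated])
qed

text \<open>Every infinite subset of the witness set accumulates: at a point of some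
  cell if one of its rows is infinite, at 0 otherwise (its lines are at most
  singletons because the D(a,b) are disjoint).\<close>
lemma witness_set_accumulation:
  assumes "\<And>p. D p \<subseteq> circle" "disjoint_family_on D (L \<times> L)"
    and B: "B \<subseteq> witness_set L D" "infinite B"
  shows "\<exists>x \<in> brandt_carrier L. x \<in> brandt_topology L derived_set_of B"
proof (cases "\<exists>a b. infinite {x. Some (a, x, b) \<in> B}")
  case True
  then obtain a b where row: "infinite {x. Some (a, x, b) \<in> B}" by blast
  then obtain x0 where "Some (a, x0, b) \<in> B"
    using infinite_imp_nonempty by blast
  then have "a \<in> L" "b \<in> L" using B(1) unfolding witness_set_def by auto
  moreover have "{x. Some (a, x, b) \<in> B} \<subseteq> circle"
    using B(1) assms(1) unfolding witness_set_def by blast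
  ultimately obtain y where "y \<in> circle" "Some (a, y, b) \<in> brandt_topology L derived_set_of B"
    using row_accumulation[of a L b "{x. Some (a, x, b) \<in> B}" B] row by blast
  moreover have "Some (a, y, b) \<in> brandt_carrier L"
    using \<open>a \<in> L\<close> \<open>b \<in> L\<close> \<open>y \<in> circle\<close> by (simp add: brandt_carrier_def)
  ultimately show ?thesis by blast
next
  case False
  then have rows: "finite {x. Some (a, x, b) \<in> B}" for a b by blast
  have lines: "finite {(a, b). Some (a, x, b) \<in> B}" for x
  proof -
    have "{(a, b). Some (a, x, b) \<in> B} \<subseteq> {p \<in> L \<times> L. x \<in> D p}"
      using B(1) unfolding witness_set_def by auto
    moreover have "finite {p \<in> L \<times> L. x \<in> D p}"
    proof (cases "\<exists>p0 \<in> L \<times> L. x \<in> D p0")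
      case True
      then obtain p0 where "p0 \<in> L \<times> L" "x \<in> D p0" by blast
      with assms(2) have "{p \<in> L \<times> L. x \<in> D p} \<subseteq> {p0}"
        unfolding disjoint_family_on_def by blast
      then show ?thesis using finite_subset by blast
    next
      case False
      then have "{p \<in> L \<times> L. x \<in> D p} = {}" by blast
      then show ?thesis by (simp only: finite.emptyI)
    qed
    ultimately show ?thesis using finite_subset by blast
  qed
  have "B \<subseteq> Some ` (L \<times> circle \<times> L)"
  proof
    fix q assume "q \<in> B"
    then obtain a x b where "q = Some (a, x, b)" "a \<in> L" "b \<in> L" "x \<in> D (a, b)"
      using B(1) unfolding witness_set_def by blast
    then show "q \<in> Some ` (L \<times> circle \<times> L)" using assms(1) by blast
  qed
  then have "None \<in> brandt_topology L derived_set_of B"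
    using B(2) rows lines by (rule zero_accumulation)
  then show ?thesis by (auto simp: brandt_carrier_def)
qed

lemma card_le_continuum_imp_pracompact:
  fixes f :: "'l \<Rightarrow> real"
  assumes "infinite L" "inj_on f L"
  shows "countably_pracompact (brandt_topology L)"
proof -
  have "|L| \<le>o |UNIV :: real set|"
    using assms(2) card_of_ordLeq[of L "UNIV :: real set"] by blast
  then have "|L \<times> L| \<le>o |UNIV :: real set|"
    using card_of_times_le_continuum by blast
  then obtain D where D: "\<And>p. D p \<subseteq> circle"
    "\<And>p W. p \<in> L \<times> L \<Longrightarrow> openin (top_of_set circle) W \<Longrightarrow> W \<noteq> {} \<Longrightarrow> D p \<inter> W \<noteq> {}"
    "disjoint_family_on D (L \<times> L)"
    by (rule disjoint_dense_subsets_of_circle) blast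
  have "witness_set L D \<subseteq> brandt_carrier L"
    using D(1) unfolding witness_set_def brandt_carrier_def by auto
  moreover have "brandt_topology L closure_of witness_set L D = brandt_carrier L"
    using assms(1) D(2) by (rule closure_of_witness_set)
  moreover have "\<forall>B. B \<subseteq> witness_set L D \<and> infinite B \<longrightarrow>
      (\<exists>x \<in> brandt_carrier L. x \<in> brandt_topology L derived_set_of B)"
    using witness_set_accumulation[OF D(1,3)] by blast
  ultimately show ?thesis
    unfolding countably_pracompact_def topspace_brandt_topology by blast
qed


theorem proposition2p14:
  fixes L :: "'l set"
  assumes "infinite L"
  shows "countably_pracompact (brandt_topology L) \<longleftrightarrow> (\<exists>f :: 'l \<Rightarrow> real. inj_on f L)"
  using pracompact_imp_card_le_continuum card_le_continuum_imp_pracompact assms by blast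

end
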